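(* Let $F:\mathbb{R}^n\to\mathbb{R}$ be a finite PL function and $M>0$ such that $F(C)\subseteq(-M,M)$ for every flat cell $C$. Then the inclusions $F^{-1}(M)\hookrightarrow F^{-1}([M,\infty))$ and $F^{-1}(-M)\hookrightarrow F^{-1}((-\infty,-M])$ induce isomorphisms on singular homology in all degrees.
   Context: A finite PL function $F:\mathbb{R}^n\to\mathbb{R}$ is a continuous function affine-linear on each cell of some finite polyhedral complex (finite collection of polyhedral sets closed under faces, pairwise intersecting in common faces) whose union is $\mathbb{R}^n$; a cell is flat if $F$ is constant on it (all $0$-cells are flat). *)

theory Defs
  imports "HOL-Analysis.Analysis" "HOL-Homology.Homology"
begin

definition polyhedral_complex :: "'a::euclidean_space set set \<Rightarrow> bool" where
  "polyhedral_complex \<C> \<equiv>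
     finite \<C> \<and>
     (\<forall>S\<in>\<C>. polyhedron S \<and> S \<noteq> {}) \<and>
     (\<forall>F S. S \<in> \<C> \<and> F face_of S \<and> F \<noteq> {} \<longrightarrow> F \<in> \<C>) \<and>
     (\<forall>S S'. S \<in> \<C> \<and> S' \<in> \<C> \<longrightarrow> (S \<inter> S') face_of S \<and> (S \<inter> S') face_of S')"

definition PL_wrt :: "('a::euclidean_space \<Rightarrow> real) \<Rightarrow> 'a set set \<Rightarrow> bool" where
  "PL_wrt F \<C> \<equiv>
     polyhedral_complex \<C> \<and> \<Union>\<C> = UNIV \<and> continuous_on UNIV F \<and>
     (\<forall>C\<in>\<C>. \<exists>a b. \<forall>x\<in>C. F x = a \<bullet> x + b)"

definition finite_PL :: "('a::euclidean_space \<Rightarrow> real) \<Rightarrow> bool" where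
  "finite_PL F \<equiv> \<exists>\<C>. PL_wrt F \<C>"

definition flat_cell :: "('a \<Rightarrow> real) \<Rightarrow> 'a set \<Rightarrow> bool" where
  "flat_cell F C \<equiv> \<exists>c. \<forall>x\<in>C. F x = c"

end

theory Submission
  imports Defs
begin

text \<open>Every cell contains a minimal cell, which has no proper faces and is therefore an
affine subspace; on it \<open>F\<close> is either constant with value below \<open>M\<close> or unbounded below.
So every cell meets \<open>{F < M}\<close>, and gluing one such point per cell with a partition of
unity subordinate to the stars of the cells gives a continuous \<open>q\<close> with \<open>F (q x) < M\<close>
such that \<open>x\<close> and \<open>q x\<close> always lie in a common cell. Sliding each point of
\<open>{F \<ge> M}\<close> along the segment towards \<open>q x\<close> until \<open>F\<close> reaches \<open>M\<close> is a deformation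
retraction onto \<open>{F = M}\<close>. The case of \<open>-M\<close> is the same argument for \<open>-F\<close>.\<close>

lemma
  assumes "polyhedral_complex \<C>"
  shows polyhedral_complex_finite: "finite \<C>"
    and polyhedral_complex_polyhedron: "C \<in> \<C> \<Longrightarrow> polyhedron C"
    and polyhedral_complex_nonempty: "C \<in> \<C> \<Longrightarrow> C \<noteq> {}"
    and polyhedral_complex_face: "C \<in> \<C> \<Longrightarrow> G face_of C \<Longrightarrow> G \<noteq> {} \<Longrightarrow> G \<in> \<C>"
    and polyhedral_complex_Int_face: "C \<in> \<C> \<Longrightarrow> C' \<in> \<C> \<Longrightarrow> (C \<inter> C') face_of C"
  using assms unfolding polyhedral_complex_def by blast+

lemma polyhedral_complex_contains_affine_cell:
  assumes cplx: "polyhedral_complex \<C>" and D: "D \<in> \<C>"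
  obtains A where "A \<in> \<C>" "A \<subseteq> D" "affine A"
proof -
  have fin: "finite {C\<in>\<C>. C \<subseteq> D}"
    using polyhedral_complex_finite[OF cplx] by simp
  have ne: "{C\<in>\<C>. C \<subseteq> D} \<noteq> {}" using D by blast
  obtain A where A: "A \<in> {C\<in>\<C>. C \<subseteq> D}"
    and minimal: "\<forall>C\<in>{C\<in>\<C>. C \<subseteq> D}. C \<subseteq> A \<longrightarrow> A = C"
    using finite_has_minimal[OF fin ne] by blast
  have "G = {}" if "G face_of A" "G \<noteq> A" for G
  proof (rule ccontr)
    assume "G \<noteq> {}"
    then have "G \<in> \<C>" using polyhedral_complex_face[OF cplx _ that(1)] A by blast
    moreover have "G \<subseteq> A" using face_of_imp_subset[OF that(1)] .
    ultimately show False using minimal A that(2) by blast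
  qed
  then have "rel_frontier A = {}"
    using rel_frontier_of_polyhedron_alt[OF polyhedral_complex_polyhedron[OF cplx]] A by blast
  then show thesis using that A rel_frontier_eq_empty by blast
qed

lemma
  assumes "PL_wrt F \<C>"
  shows PL_wrt_polyhedral_complex: "polyhedral_complex \<C>"
    and PL_wrt_cover: "\<Union>\<C> = UNIV"
    and PL_wrt_continuous: "continuous_on UNIV F"
    and PL_wrt_affine_on_cell: "C \<in> \<C> \<Longrightarrow> \<exists>a b. \<forall>x\<in>C. F x = a \<bullet> x + b"
  using assms unfolding PL_wrt_def by blast+

lemma PL_cell_meets_sublevel:
  fixes F :: "'a::euclidean_space \<Rightarrow> real"
  assumes PL: "PL_wrt F \<C>" and flat: "\<forall>C\<in>\<C>. flat_cell F C \<longrightarrow> F ` C \<subseteq> {..<M}"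
    and D: "D \<in> \<C>"
  shows "\<exists>y\<in>D. F y < M"
proof -
  obtain A where A: "A \<in> \<C>" "A \<subseteq> D" "affine A"
    using polyhedral_complex_contains_affine_cell[OF PL_wrt_polyhedral_complex[OF PL] D] .
  have "\<exists>z\<in>A. F z < M"
  proof (cases "flat_cell F A")
    case True
    then have "F ` A \<subseteq> {..<M}" using flat A(1) by blast
    moreover obtain z where "z \<in> A"
      using polyhedral_complex_nonempty[OF PL_wrt_polyhedral_complex[OF PL] A(1)] by blast
    ultimately show ?thesis by blast
  next
    case False
    then obtain y1 y2 where y: "y1 \<in> A" "y2 \<in> A" "F y1 \<noteq> F y2"
      unfolding flat_cell_def by blast
    obtain a b where ab: "\<forall>x\<in>A. F x = a \<bullet> x + b" using PL_wrt_affine_on_cell[OF PL A(1)] by blast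
    define t where "t = (M - 1 - F y1) / (F y2 - F y1)"
    define z where "z = (1 - t) *\<^sub>R y1 + t *\<^sub>R y2"
    have z: "z \<in> A" unfolding z_def using mem_affine[OF A(3) y(1,2), of "1 - t" t] by simp
    have "F z = F y1 + t * (F y2 - F y1)"
      using ab z y unfolding z_def by (simp add: inner_add_right algebra_simps)
    also have "\<dots> = M - 1" using y(3) by (simp add: t_def)
    finally have "F z < M" by simp
    then show ?thesis using z by blast
  qed
  then show ?thesis using A(2) by blast
qed

lemma polyhedral_complex_carrier_cell:
  assumes cplx: "polyhedral_complex \<C>" and x: "x \<in> \<Union>\<C>"
  obtains D where "D \<in> \<C>" "x \<in> D" "\<And>C. C \<in> \<C> \<Longrightarrow> x \<in> C \<Longrightarrow> D \<subseteq> C"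
proof -
  have fin: "finite {C\<in>\<C>. x \<in> C}" using polyhedral_complex_finite[OF cplx] by simp
  have ne: "{C\<in>\<C>. x \<in> C} \<noteq> {}" using x by blast
  obtain D where D: "D \<in> \<C>" "x \<in> D" and minimal: "\<forall>C\<in>{C\<in>\<C>. x \<in> C}. C \<subseteq> D \<longrightarrow> D = C"
    using finite_has_minimal[OF fin ne] by blast
  have "D \<subseteq> C" if C: "C \<in> \<C>" "x \<in> C" for C
  proof -
    have "D \<inter> C \<in> \<C>"
      using polyhedral_complex_face[OF cplx D(1) polyhedral_complex_Int_face[OF cplx D(1) C(1)]] D C
      by blast
    then show ?thesis using minimal D C by blast
  qed
  then show thesis using that D by blast
qed

text \<open>The weight of \<open>D\<close> is the distance to the union of the cells not containing \<open>D\<close>,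
so it vanishes on all of them and is positive at the points whose carrier cell is \<open>D\<close>.\<close>

lemma polyhedral_complex_continuous_selection:
  fixes y :: "'a::euclidean_space set \<Rightarrow> 'b::real_normed_vector"
  assumes cplx: "polyhedral_complex \<C>" and cover: "\<Union>\<C> = UNIV"
  obtains q where "continuous_on UNIV q"
    "\<And>x C. C \<in> \<C> \<Longrightarrow> x \<in> C \<Longrightarrow> q x \<in> convex hull (y ` {D\<in>\<C>. D \<subseteq> C})"
proof -
  have fin: "finite \<C>" and closed: "\<And>C. C \<in> \<C> \<Longrightarrow> closed C"
    using polyhedral_complex_finite[OF cplx] polyhedral_complex_polyhedron[OF cplx]
    by (auto intro: polyhedron_imp_closed)
  define N where "N D = \<Union>{C\<in>\<C>. \<not> D \<subseteq> C}" for D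
  define w where "w D = (if N D = {} then (\<lambda>x::'a. 1::real) else (\<lambda>x. infdist x (N D)))" for D
  define W where "W x = (\<Sum>D\<in>\<C>. w D x)" for x
  define q where "q x = (\<Sum>D\<in>\<C>. (w D x / W x) *\<^sub>R y D)" for x
  have w_nonneg: "w D x \<ge> 0" for D x by (simp add: w_def infdist_nonneg)
  have w_zero: "w D x = 0" if "C \<in> \<C>" "x \<in> C" "\<not> D \<subseteq> C" for D x C
  proof -
    have "x \<in> N D" unfolding N_def using that by blast
    then show ?thesis by (auto simp: w_def infdist_zero)
  qed
  have closed_N: "closed (N D)" for D
    unfolding N_def using fin closed by (intro closed_Union) auto
  have W_pos: "W x > 0" for x
  proof -
    obtain D where D: "D \<in> \<C>" "x \<in> D" "\<And>C. C \<in> \<C> \<Longrightarrow> x \<in> C \<Longrightarrow> D \<subseteq> C"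
      using polyhedral_complex_carrier_cell[OF cplx] cover by blast
    have "x \<notin> N D" using D unfolding N_def by blast
    have "w D x > 0"
    proof (cases "N D = {}")
      case False
      then have "infdist x (N D) \<noteq> 0"
        using in_closed_iff_infdist_zero[OF closed_N False] \<open>x \<notin> N D\<close> by blast
      then show ?thesis using False infdist_nonneg[of x "N D"] by (simp add: w_def)
    qed (simp add: w_def)
    also have "w D x \<le> W x"
      unfolding W_def using D fin w_nonneg by (intro member_le_sum) auto
    finally show ?thesis .
  qed
  have cont_w: "continuous_on UNIV (w D)" for D
    by (cases "N D = {}") (auto simp: w_def intro!: continuous_intros)
  have "continuous_on UNIV q"
    unfolding q_def[abs_def] W_def[abs_def]
    using W_pos by (intro continuous_intros cont_w) (auto simp: W_def less_le)
  moreover have "q x \<in> convex hull (y ` I)" if "C \<in> \<C>" "x \<in> C" and I: "I = {D\<in>\<C>. D \<subseteq> C}" for x C I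
  proof -
    have sub: "I \<subseteq> \<C>" using I by blast
    have q_I: "q x = (\<Sum>D\<in>I. (w D x / W x) *\<^sub>R y D)"
      unfolding q_def using that by (intro sum.mono_neutral_right[OF fin sub]) (auto dest: w_zero)
    have "W x = (\<Sum>D\<in>I. w D x)"
      unfolding W_def using that by (intro sum.mono_neutral_right[OF fin sub]) (auto dest: w_zero)
    then have sum_one: "(\<Sum>D\<in>I. w D x / W x) = 1"
      using W_pos[of x] by (simp add: sum_divide_distrib[symmetric])
    have "finite I" using fin sub finite_subset by blast
    show ?thesis
      unfolding q_I using W_pos[of x] w_nonneg
      by (intro convex_sum[OF \<open>finite I\<close> convex_convex_hull sum_one]) (auto intro: hull_inc)
  qed
  ultimately show thesis using that by blast
qed

lemma PL_sublevel_selection: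
  fixes F :: "'a::euclidean_space \<Rightarrow> real"
  assumes PL: "PL_wrt F \<C>" and flat: "\<forall>C\<in>\<C>. flat_cell F C \<longrightarrow> F ` C \<subseteq> {..<M}"
  obtains q where "continuous_on UNIV q" "\<And>x. F (q x) < M"
    "\<And>x. \<exists>a b. \<forall>z\<in>closed_segment x (q x). F z = a \<bullet> z + b"
proof -
  note cplx = PL_wrt_polyhedral_complex[OF PL] and cover = PL_wrt_cover[OF PL]
  obtain y where y: "\<And>D. D \<in> \<C> \<Longrightarrow> y D \<in> D \<and> F (y D) < M"
    using PL_cell_meets_sublevel[OF PL flat] by metis
  obtain q where q: "continuous_on UNIV q"
    and hull: "\<And>x C. C \<in> \<C> \<Longrightarrow> x \<in> C \<Longrightarrow> q x \<in> convex hull (y ` {D\<in>\<C>. D \<subseteq> C})"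
    using polyhedral_complex_continuous_selection[OF cplx cover] by blast
  have "F (q x) < M \<and> (\<exists>a b. \<forall>z\<in>closed_segment x (q x). F z = a \<bullet> z + b)" for x
  proof -
    obtain C where C: "C \<in> \<C>" "x \<in> C" using cover by blast
    obtain a b where ab: "\<forall>z\<in>C. F z = a \<bullet> z + b" using PL_wrt_affine_on_cell[OF PL C(1)] by blast
    have "convex C"
      using polyhedron_imp_convex[OF polyhedral_complex_polyhedron[OF cplx C(1)]] .
    then have "convex (C \<inter> {z. a \<bullet> z < M - b})" by (simp add: convex_Int convex_halfspace_lt)
    moreover have "y ` {D\<in>\<C>. D \<subseteq> C} \<subseteq> C \<inter> {z. a \<bullet> z < M - b}"
      using y ab by fastforce
    ultimately have qx: "q x \<in> C" "a \<bullet> q x < M - b"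
      using hull[OF C] hull_minimal[of _ _ convex] by blast+
    have "closed_segment x (q x) \<subseteq> C"
      using closed_segment_subset[OF C(2) qx(1) \<open>convex C\<close>] .
    then show ?thesis using ab qx by fastforce
  qed
  then show thesis using that q by blast
qed

text \<open>The retraction moves \<open>x\<close> to the point of \<open>[x, q x]\<close> where the affine
function reaches \<open>M\<close>; the straight-line homotopy back to \<open>x\<close> stays in the half-space
\<open>{F \<ge> M}\<close> of the segment.\<close>

lemma superlevel_set_homology_iso:
  fixes F :: "'a::real_inner \<Rightarrow> real"
  assumes cont_F: "continuous_on UNIV F" and cont_q: "continuous_on UNIV q"
    and below: "\<And>x. M \<le> F x \<Longrightarrow> F (q x) < M"
    and affine_segment: "\<And>x. M \<le> F x \<Longrightarrow> \<exists>a b. \<forall>z\<in>closed_segment x (q x). F z = a \<bullet> z + b"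
  shows "hom_induced p (top_of_set (F -` {M})) {} (top_of_set (F -` {M..})) {} id
       \<in> iso (homology_group p (top_of_set (F -` {M})))
             (homology_group p (top_of_set (F -` {M..})))"
proof -
  define S where "S = F -` {M..}"
  define T where "T = F -` {M}"
  define lam where "lam x = (F x - M) / (F x - F (q x))" for x
  define r where "r x = (1 - lam x) *\<^sub>R x + lam x *\<^sub>R q x" for x
  have r_in: "r x \<in> closed_segment x (q x)" and F_r: "F (r x) = M"
    and segment_in_S: "closed_segment (r x) x \<subseteq> S"
    if x: "x \<in> S" for x
  proof -
    have Fx: "M \<le> F x" using x by (simp add: S_def)
    obtain a b where ab: "\<forall>z\<in>closed_segment x (q x). F z = a \<bullet> z + b"
      using affine_segment[OF Fx] by blast
    have gap: "F x - F (q x) > 0" using below[OF Fx] Fx by simp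
    have "0 \<le> lam x" "lam x \<le> 1" using Fx gap below[OF Fx] by (simp_all add: lam_def divide_simps)
    then show r_in: "r x \<in> closed_segment x (q x)"
      unfolding r_def closed_segment_def by auto
    have "F (r x) = (1 - lam x) * F x + lam x * F (q x)"
      using ab r_in by (simp add: r_def inner_add_right algebra_simps)
    also have "\<dots> = F x - lam x * (F x - F (q x))" by (simp add: algebra_simps)
    also have "\<dots> = M" using gap by (simp add: lam_def)
    finally show Fr: "F (r x) = M" .
    have "closed_segment (r x) x \<subseteq> closed_segment x (q x) \<inter> {z. M - b \<le> a \<bullet> z}"
      using ab r_in Fr Fx
      by (intro closed_segment_subset convex_Int convex_closed_segment convex_halfspace_ge) auto
    then show "closed_segment (r x) x \<subseteq> S" using ab by (force simp: S_def)
  qed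
  have cont_r: "continuous_on S r"
  proof -
    have "F x - F (q x) \<noteq> 0" if "x \<in> S" for x
      using below[of x] that by (simp add: S_def)
    moreover have "continuous_on S (\<lambda>x. F (q x))"
      by (rule continuous_on_subset[OF continuous_on_compose2[OF cont_F cont_q]]) auto
    ultimately show ?thesis unfolding r_def[abs_def] lam_def[abs_def]
      by (intro continuous_intros continuous_on_subset[OF cont_F] continuous_on_subset[OF cont_q]) auto
  qed
  have "retraction_maps (top_of_set S) (top_of_set T) r id"
    using cont_r F_r by (auto simp: retraction_maps_def S_def T_def r_def lam_def)
  moreover have "homotopic_with_canon (\<lambda>h. True) S S r id"
  proof (rule homotopic_with_linear[OF cont_r continuous_on_id'])
    show "closed_segment (r x) (id x) \<subseteq> S" if "x \<in> S" for x
      using segment_in_S[OF that] by simp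
  qed
  ultimately have "hom_induced p (top_of_set T) {} (top_of_set S) {} id
      \<in> iso (homology_group p (top_of_set T)) (homology_group p (top_of_set S))"
    by (intro deformation_retract_relative_homology_group_isomorphism_id) auto
  then show ?thesis unfolding S_def T_def .
qed

lemma PL_superlevel_set_homology_iso:
  fixes F :: "'a::euclidean_space \<Rightarrow> real"
  assumes PL: "PL_wrt F \<C>" and flat: "\<forall>C\<in>\<C>. flat_cell F C \<longrightarrow> F ` C \<subseteq> {..<M}"
  shows "hom_induced p (top_of_set (F -` {M})) {} (top_of_set (F -` {M..})) {} id
       \<in> iso (homology_group p (top_of_set (F -` {M})))
             (homology_group p (top_of_set (F -` {M..})))"
proof -
  obtain q where "continuous_on UNIV q" "\<And>x. F (q x) < M"
    "\<And>x. \<exists>a b. \<forall>z\<in>closed_segment x (q x). F z = a \<bullet> z + b"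
    using PL_sublevel_selection[OF PL flat] by blast
  then show ?thesis by (intro superlevel_set_homology_iso[OF PL_wrt_continuous[OF PL]])
qed

lemma PL_wrt_uminus:
  assumes PL: "PL_wrt F \<C>"
  shows "PL_wrt (\<lambda>x. - F x) \<C>"
proof -
  have "\<exists>a' b'. \<forall>x\<in>C. - F x = a' \<bullet> x + b'" if C: "C \<in> \<C>" for C
  proof -
    obtain a b where "\<forall>x\<in>C. F x = a \<bullet> x + b" using PL_wrt_affine_on_cell[OF PL C] by blast
    then show ?thesis by (intro exI[of _ "- a"] exI[of _ "- b"]) simp
  qed
  then show ?thesis
    unfolding PL_wrt_def
    using PL_wrt_polyhedral_complex[OF PL] PL_wrt_cover[OF PL]
      continuous_on_minus[OF PL_wrt_continuous[OF PL]] by blast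
qed

lemma flat_cell_uminus: "flat_cell (\<lambda>x. - F x) C \<longleftrightarrow> flat_cell F C"
  unfolding flat_cell_def by (metis minus_equation_iff)

theorem mainTheorem16:
  fixes F :: "'a::euclidean_space \<Rightarrow> real" and \<C> :: "'a set set" and M :: real
  assumes "PL_wrt F \<C>"
    and "M > 0"
    and "\<forall>C\<in>\<C>. flat_cell F C \<longrightarrow> F ` C \<subseteq> {-M<..<M}"
  shows "\<forall>p::int.
     hom_induced p (subtopology euclidean (F -` {M})) {}
                   (subtopology euclidean (F -` {M..})) {} id
       \<in> iso (homology_group p (subtopology euclidean (F -` {M})))
             (homology_group p (subtopology euclidean (F -` {M..})))
   \<and> hom_induced p (subtopology euclidean (F -` {-M})) {}
                   (subtopology euclidean (F -` {..-M})) {} id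
       \<in> iso (homology_group p (subtopology euclidean (F -` {-M})))
             (homology_group p (subtopology euclidean (F -` {..-M})))"
proof -
  have "\<forall>C\<in>\<C>. flat_cell F C \<longrightarrow> F ` C \<subseteq> {..<M}"
    using assms(3) by fastforce
  note upper = PL_superlevel_set_homology_iso[OF assms(1) this]
  have "\<forall>C\<in>\<C>. flat_cell (\<lambda>x. - F x) C \<longrightarrow> (\<lambda>x. - F x) ` C \<subseteq> {..<M}"
    using assms(3) by (fastforce simp: flat_cell_uminus)
  note lower = PL_superlevel_set_homology_iso[OF PL_wrt_uminus[OF assms(1)] this]
  have "(\<lambda>x. - F x) -` {M} = F -` {-M}" "(\<lambda>x. - F x) -` {M..} = F -` {..-M}" by auto
  with upper lower show ?thesis by simp
qed

end
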